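(* Let $\ell\in\{1,2\}$ and let ${\cal H}\subset{\cal H}_0$, $a_\ell$, $C_{{\rm G1},\ell}$, $C_{{\rm G2},\ell}$, ${\mathcal A}_\ell$ be as in the context (the standing assumptions there hold), and let $0<C_{{\rm qo},\ell}<\infty$. Let $({\cal H}_N)_{N=0}^\infty$ be a sequence of finite-dimensional subspaces of ${\cal H}$ such that, for every $N$ and every $f\in{\cal H}_0$, the Galerkin solution $u_N\in{\cal H}_N$ of $a_\ell(u_N,v_N)=(f,v_N)_{{\cal H}_0}$ for all $v_N\in{\cal H}_N$ exists, is unique, and satisfies $$\|u-u_N\|_{{\cal H}}\le C_{{\rm qo},\ell}\|(I-\Pi_N)u\|_{{\cal H}},$$ where $\Pi_N:{\cal H}\to{\cal H}_N$ is the ${\cal H}$-orthogonal projection and $u\in{\cal H}$ is the solution of $a_\ell(u,v)=(f,v)_{{\cal H}_0}$ for all $v\in{\cal H}$. Then for every $N$, $$\inf_{u_N\in{\cal H}_N\setminus\{0\}}\sup_{v_N\in{\cal H}_N\setminus\{0\}}\frac{|a_\ell(u_N,v_N)|}{\|u_N\|_{{\cal H}}\|v_N\|_{{\cal H}}}\ge\frac{1}{(C_{{\rm G1},\ell})^{-1}\Big(1+C_{{\rm G2},\ell}(1+C_{{\rm qo},\ell})\|{\mathcal A}_\ell^{-1}\|_{{\cal H}_0\to{\cal H}}\Big)}.$$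
   Context: Standing assumptions: ${\cal H}\subset{\cal H}_0$ are complex Hilbert spaces with $\|v\|_{{\cal H}_0}\le\|v\|_{{\cal H}}$ for $v\in{\cal H}$, and ${\cal H}_0$ is identified with its dual so that ${\cal H}\subset{\cal H}_0\subset{\cal H}^*$. ${\mathcal D}:{\cal H}\to{\cal H}_0$ is linear with $\|{\mathcal D}\|_{{\cal H}\to{\cal H}_0}\le 1$; $b(\cdot,\cdot)$ is a continuous sesquilinear form on ${\cal H}$; for $\ell=1,2$, $\mu_\ell^{-1}:{\cal H}_0\to{\cal H}_0$ and $\epsilon_\ell:{\cal H}_0\to{\cal H}_0$ are bounded linear operators, and $a_\ell(u,v):=(\mu_\ell^{-1}{\mathcal D}u,{\mathcal D}v)_{{\cal H}_0}+b(u,v)-(\epsilon_\ell u,v)_{{\cal H}_0}$. For $\ell=1,2$ there exist $C_{{\rm G1},\ell},C_{{\rm G2},\ell}>0$ with $|a_\ell(v,v)+C_{{\rm G2},\ell}\|v\|_{{\cal H}_0}^2|\ge C_{{\rm G1},\ell}\|v\|_{{\cal H}}^2$ for all $v\in{\cal H}$. ${\mathcal A}_\ell:{\cal H}\to{\cal H}^*$ is defined by $\langle{\mathcal A}_\ell u,v\rangle_{{\cal H}^*\times{\cal H}}=a_\ell(u,v)$, and $\|{\mathcal A}_\ell^{-1}\|_{{\cal H}_0\to{\cal H}}$ is the norm of the solution map $f\mapsto u$ from ${\cal H}_0$ to ${\cal H}$. *)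

theory Defs
  imports "HOL-Analysis.Analysis"
begin

text \<open>There is no complex-vector-space type class in the distribution, so the
complex scalar multiplication sc is an explicit parameter satisfying the module axioms.\<close>

definition cvs :: "(complex \<Rightarrow> 'a::ab_group_add \<Rightarrow> 'a) \<Rightarrow> bool" where
  "cvs sc \<longleftrightarrow> (\<forall>c x y. sc c (x + y) = sc c x + sc c y) \<and>
     (\<forall>c d x. sc (c + d) x = sc c x + sc d x) \<and>
     (\<forall>c d x. sc c (sc d x) = sc (c * d) x) \<and> (\<forall>x. sc 1 x = x)"

definition csubsp :: "(complex \<Rightarrow> 'a::ab_group_add \<Rightarrow> 'a) \<Rightarrow> 'a set \<Rightarrow> bool" where
  "csubsp sc S \<longleftrightarrow> 0 \<in> S \<and> (\<forall>x\<in>S. \<forall>y\<in>S. x + y \<in> S) \<and> (\<forall>c. \<forall>x\<in>S. sc c x \<in> S)"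

definition cinner_on :: "(complex \<Rightarrow> 'a::ab_group_add \<Rightarrow> 'a) \<Rightarrow> ('a \<Rightarrow> 'a \<Rightarrow> complex) \<Rightarrow> 'a set \<Rightarrow> bool" where
  "cinner_on sc ip S \<longleftrightarrow>
     (\<forall>x\<in>S. \<forall>y\<in>S. \<forall>z\<in>S. ip (x + y) z = ip x z + ip y z) \<and>
     (\<forall>c. \<forall>x\<in>S. \<forall>y\<in>S. ip (sc c x) y = c * ip x y) \<and>
     (\<forall>x\<in>S. \<forall>y\<in>S. ip y x = cnj (ip x y)) \<and>
     (\<forall>x\<in>S. 0 \<le> Re (ip x x)) \<and>
     (\<forall>x\<in>S. ip x x = 0 \<longrightarrow> x = 0)"

definition ip_norm :: "('a \<Rightarrow> 'a \<Rightarrow> complex) \<Rightarrow> 'a \<Rightarrow> real" where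
  "ip_norm ip x = sqrt (Re (ip x x))"

definition complete_wrt :: "('a::ab_group_add \<Rightarrow> 'a \<Rightarrow> complex) \<Rightarrow> 'a set \<Rightarrow> bool" where
  "complete_wrt ip S \<longleftrightarrow> (\<forall>X. (\<forall>n. X n \<in> S) \<and>
       (\<forall>e>0. \<exists>M. \<forall>m\<ge>M. \<forall>n\<ge>M. ip_norm ip (X m - X n) < e) \<longrightarrow>
       (\<exists>x\<in>S. (\<lambda>n. ip_norm ip (X n - x)) \<longlonglongrightarrow> 0))"

definition hilbert_on :: "(complex \<Rightarrow> 'a::ab_group_add \<Rightarrow> 'a) \<Rightarrow> ('a \<Rightarrow> 'a \<Rightarrow> complex) \<Rightarrow> 'a set \<Rightarrow> bool" where
  "hilbert_on sc ip S \<longleftrightarrow> csubsp sc S \<and> cinner_on sc ip S \<and> complete_wrt ip S"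

definition clinear_on :: "(complex \<Rightarrow> 'a::ab_group_add \<Rightarrow> 'a) \<Rightarrow> 'a set \<Rightarrow> ('a \<Rightarrow> 'a) \<Rightarrow> bool" where
  "clinear_on sc S f \<longleftrightarrow> (\<forall>x\<in>S. \<forall>y\<in>S. f (x + y) = f x + f y) \<and>
     (\<forall>c. \<forall>x\<in>S. f (sc c x) = sc c (f x))"

definition sesq_on :: "(complex \<Rightarrow> 'a::ab_group_add \<Rightarrow> 'a) \<Rightarrow> 'a set \<Rightarrow> ('a \<Rightarrow> 'a \<Rightarrow> complex) \<Rightarrow> bool" where
  "sesq_on sc S b \<longleftrightarrow>
     (\<forall>x\<in>S. \<forall>y\<in>S. \<forall>z\<in>S. b (x + y) z = b x z + b y z) \<and>
     (\<forall>x\<in>S. \<forall>y\<in>S. \<forall>z\<in>S. b x (y + z) = b x y + b x z) \<and>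
     (\<forall>c. \<forall>x\<in>S. \<forall>y\<in>S. b (sc c x) y = c * b x y) \<and>
     (\<forall>c. \<forall>x\<in>S. \<forall>y\<in>S. b x (sc c y) = cnj c * b x y)"

definition fin_dim_subsp :: "(complex \<Rightarrow> 'a::ab_group_add \<Rightarrow> 'a) \<Rightarrow> 'a set \<Rightarrow> bool" where
  "fin_dim_subsp sc S \<longleftrightarrow> (\<exists>B. finite B \<and> S = range (\<lambda>c. \<Sum>b\<in>B. sc (c b) b))"

definition oproj :: "('a::ab_group_add \<Rightarrow> 'a \<Rightarrow> complex) \<Rightarrow> 'a set \<Rightarrow> 'a \<Rightarrow> 'a" where
  "oproj ip S x = (THE p. p \<in> S \<and> (\<forall>w\<in>S. ip (x - p) w = 0))"

text \<open>Norm of the solution map f \<mapsto> u from H0 (the whole type, norm from ip0)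
  to H (set Hs, norm from ipH), where u solves a(u,v) = (f,v)_0 for all v in Hs.\<close>
definition solmap_norm :: "('a::ab_group_add \<Rightarrow> 'a \<Rightarrow> complex) \<Rightarrow> ('a \<Rightarrow> 'a \<Rightarrow> complex) \<Rightarrow> 'a set
     \<Rightarrow> ('a \<Rightarrow> 'a \<Rightarrow> complex) \<Rightarrow> real" where
  "solmap_norm ip0 ipH Hs a = Sup {ip_norm ipH u / ip_norm ip0 f | u f.
       f \<noteq> 0 \<and> u \<in> Hs \<and> (\<forall>v\<in>Hs. a u v = ip0 f v)}"

text \<open>The discrete inf-sup constant, in the extended reals (so that inf over the empty set is +\<infinity>).\<close>
definition infsup :: "('a::ab_group_add \<Rightarrow> 'a \<Rightarrow> complex) \<Rightarrow> ('a \<Rightarrow> real) \<Rightarrow> 'a set \<Rightarrow> ereal" where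
  "infsup a nrm S = (INF u\<in>S - {0}. SUP v\<in>S - {0}. ereal (cmod (a u v) / (nrm u * nrm v)))"

end

(*
  Schatz's duality argument. Let V be a Galerkin space and K a bound for the discrete solution
  operator: ||u_N||_H <= K ||w||_0 whenever u_N in V solves a(u_N, v) = (w, v)_0 for all v in V.
  Quasi-optimality gives K = (1 + C_qo) ||A^-1||, since ||u - Pi_N u|| <= ||u|| and hence
  ||u_N|| <= ||u|| + ||u - u_N|| <= (1 + C_qo) ||u||.
  If w in V satisfies |a(v, w)| <= G ||v||_H for all v in V, testing with the Galerkin solution
  u_N for the data w gives ||w||_0^2 = a(u_N, w) <= G K ||w||_H, and the Garding inequality turns
  this into C_G1 ||w||_H <= G (1 + C_G2 K). For G = 0 this says that a(., w) = 0 on V forces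
  w = 0; as V is finite-dimensional, the adjoint problem a(v, x) = (v, u)_H for all v in V is then
  solvable for every u in V. With G = ||u||_H we get C_G1 ||x|| <= ||u|| (1 + C_G2 K), while
  a(u, x) = ||u||^2, so |a(u, x)| / (||u|| ||x||) >= C_G1 / (1 + C_G2 K).
*)
theory Submission
  imports Defs
begin

lemma sesq_on_add:
  "sesq_on sc S s \<Longrightarrow> sesq_on sc S t \<Longrightarrow> sesq_on sc S (\<lambda>u v. s u v + t u v)"
  unfolding sesq_on_def by (simp add: algebra_simps)

lemma sesq_on_diff:
  "sesq_on sc S s \<Longrightarrow> sesq_on sc S t \<Longrightarrow> sesq_on sc S (\<lambda>u v. s u v - t u v)"
  unfolding sesq_on_def by (simp add: algebra_simps)

lemma sesq_on_compose:
  "sesq_on sc UNIV s \<Longrightarrow> clinear_on sc S f \<Longrightarrow> clinear_on sc S g \<Longrightarrow>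
    sesq_on sc S (\<lambda>u v. s (f u) (g v))"
  unfolding sesq_on_def clinear_on_def by simp

lemma clinear_on_id: "clinear_on sc S (\<lambda>x. x)"
  unfolding clinear_on_def by simp

lemma clinear_on_subset: "clinear_on sc T f \<Longrightarrow> S \<subseteq> T \<Longrightarrow> clinear_on sc S f"
  unfolding clinear_on_def by blast

lemma clinear_on_comp: "clinear_on sc UNIV g \<Longrightarrow> clinear_on sc S f \<Longrightarrow> clinear_on sc S (g \<circ> f)"
  unfolding clinear_on_def by simp

lemma sesq_on_weak_form:
  assumes "sesq_on sc UNIV ip0" "clinear_on sc UNIV M" "clinear_on sc UNIV E"
    and "clinear_on sc S D" "sesq_on sc S b"
  shows "sesq_on sc S (\<lambda>u v. ip0 (M (D u)) (D v) + b u v - ip0 (E u) v)"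
  using sesq_on_diff[OF sesq_on_add[OF sesq_on_compose[OF assms(1) clinear_on_comp[OF assms(2,4)]
        assms(4)] assms(5)] sesq_on_compose[OF assms(1) clinear_on_subset[OF assms(3)] clinear_on_id]]
  by simp

section \<open>Finite-dimensional complex vector spaces\<close>

locale cvector_space = vector_space sc for sc :: "complex \<Rightarrow> 'a::ab_group_add \<Rightarrow> 'a"
begin

lemma csubsp_iff_subspace: "csubsp sc S \<longleftrightarrow> subspace S"
  unfolding csubsp_def subspace_def ..

lemma fin_dim_subsp_obtains_basis:
  assumes "fin_dim_subsp sc V"
  obtains B where "finite B" "independent B" "V = span B"
proof -
  obtain C where C: "finite C" "V = span C"
    using assms span_finite unfolding fin_dim_subsp_def by auto
  obtain B where B: "B \<subseteq> C" "independent B" "C \<subseteq> span B"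
    using maximal_independent_subset by blast
  have "B \<subseteq> span C" using subset_trans[OF B(1) span_superset] .
  then have "V = span B" using C(2) B(3) by (simp add: span_eq)
  moreover have "finite B" using B(1) C(1) by (rule finite_subset)
  ultimately show thesis using that B(2) by blast
qed

lemma subspace_if_fin_dim_subsp: "fin_dim_subsp sc V \<Longrightarrow> subspace V"
  by (erule fin_dim_subsp_obtains_basis) (simp add: subspace_span)

lemma span_eq_if_independent_card_ge:
  assumes B: "finite B" and C: "independent C" "C \<subseteq> span B" and card: "card B \<le> card C"
  shows "span C = span B"
proof -
  have "y \<in> span C" if y: "y \<in> span B" for y
  proof (rule ccontr)
    assume y_notin: "y \<notin> span C"
    have "independent (insert y C)" using independent_insertI[OF y_notin C(1)] .
    moreover have "insert y C \<subseteq> span B" using y C(2) by blast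
    ultimately have "card (insert y C) \<le> card B" using independent_span_bound[OF B] by blast
    moreover have "finite C" using independent_span_bound[OF B C] by blast
    moreover have "y \<notin> C" using y_notin span_base by blast
    ultimately show False using card by simp
  qed
  moreover have "span C \<subseteq> span B" using C(2) span_minimal subspace_span by blast
  ultimately show ?thesis by blast
qed

lemma linear_image_span_eq_if_inj_on:
  assumes g: "Vector_Spaces.linear sc sc g" and B: "finite B" "independent B"
    and into: "g ` span B \<subseteq> span B" and inj: "inj_on g (span B)"
  shows "g ` span B = span B"
proof -
  interpret g: Vector_Spaces.linear sc sc g by fact
  have "independent (g ` B)" by (rule g.independent_injective_image[OF B(2) inj])
  moreover have "card (g ` B) = card B"
    by (rule card_image, rule inj_on_subset[OF inj span_superset])
  moreover have "g ` B \<subseteq> span B" using into span_superset by blast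
  ultimately have "span (g ` B) = span B" by (intro span_eq_if_independent_card_ge B(1)) simp_all
  then show ?thesis by (simp add: g.span_image)
qed

end

lemma cvector_space_if_cvs: "cvs sc \<Longrightarrow> cvector_space sc"
  unfolding cvs_def by unfold_locales auto

locale csubspace = cvector_space sc for sc :: "complex \<Rightarrow> 'a::ab_group_add \<Rightarrow> 'a" +
  fixes S :: "'a set"
  assumes csubsp: "csubsp sc S"
begin

lemma subspace_S: "subspace S"
  using csubsp csubsp_iff_subspace by blast

end

section \<open>Sesquilinear forms on a subspace\<close>

locale sesq_form = csubspace sc S for sc :: "complex \<Rightarrow> 'a::ab_group_add \<Rightarrow> 'a" and S +
  fixes s :: "'a \<Rightarrow> 'a \<Rightarrow> complex"
  assumes sesq: "sesq_on sc S s"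
begin

lemma add_left: "x \<in> S \<Longrightarrow> y \<in> S \<Longrightarrow> z \<in> S \<Longrightarrow> s (x + y) z = s x z + s y z"
  using sesq[unfolded sesq_on_def, THEN conjunct1] by blast

lemma add_right: "x \<in> S \<Longrightarrow> y \<in> S \<Longrightarrow> z \<in> S \<Longrightarrow> s x (y + z) = s x y + s x z"
  using sesq[unfolded sesq_on_def, THEN conjunct2, THEN conjunct1] by blast

lemma scale_left: "x \<in> S \<Longrightarrow> y \<in> S \<Longrightarrow> s (sc c x) y = c * s x y"
  using sesq[unfolded sesq_on_def, THEN conjunct2, THEN conjunct2, THEN conjunct1] by blast

lemma scale_right: "x \<in> S \<Longrightarrow> y \<in> S \<Longrightarrow> s x (sc c y) = cnj c * s x y"
  using sesq[unfolded sesq_on_def, THEN conjunct2, THEN conjunct2, THEN conjunct2] by blast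

lemma zero_left: "y \<in> S \<Longrightarrow> s 0 y = 0"
  using scale_left[OF subspace_0[OF subspace_S], of y 0] by simp

lemma zero_right: "x \<in> S \<Longrightarrow> s x 0 = 0"
  using scale_right[OF _ subspace_0[OF subspace_S], of x 0] by simp

lemma diff_left: "x \<in> S \<Longrightarrow> y \<in> S \<Longrightarrow> z \<in> S \<Longrightarrow> s (x - y) z = s x z - s y z"
  using add_left[of "x - y" y z] subspace_diff[OF subspace_S] by simp

lemma diff_right: "x \<in> S \<Longrightarrow> y \<in> S \<Longrightarrow> z \<in> S \<Longrightarrow> s x (y - z) = s x y - s x z"
  using add_right[of x "y - z" z] subspace_diff[OF subspace_S] by simp

lemma eq_on_span:
  assumes t: "sesq_form sc S t" and B: "span B \<subseteq> S" and x: "x \<in> S" and y: "y \<in> S"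
    and eq: "\<forall>b\<in>B. s b x = t b y" and v: "v \<in> span B"
  shows "s v x = t v y"
proof -
  interpret t: sesq_form sc S t by fact
  let ?E = "{v \<in> S. s v x = t v y}"
  have "subspace ?E"
  proof (rule subspaceI)
    show "0 \<in> ?E" using subspace_0[OF subspace_S] zero_left[OF x] t.zero_left[OF y] by simp
    show "u + v \<in> ?E" if "u \<in> ?E" "v \<in> ?E" for u v
      using that x y add_left t.add_left subspace_add[OF subspace_S] by simp
    show "sc c u \<in> ?E" if "u \<in> ?E" for c u
      using that x y scale_left t.scale_left subspace_scale[OF subspace_S] by simp
  qed
  moreover have "B \<subseteq> ?E" using B eq span_superset by blast
  ultimately show ?thesis using span_minimal v by blast
qed

lemma linear_extension_of_conj_coordinates:
  assumes B: "finite B" "independent B" "span B \<subseteq> S"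
  obtains g where "Vector_Spaces.linear sc sc g"
    "\<And>x. x \<in> span B \<Longrightarrow> g x = (\<Sum>b\<in>B. sc (cnj (s b x)) b)"
proof -
  define F where "F x = (\<Sum>b\<in>B. sc (cnj (s b x)) b)" for x
  interpret vector_space_pair sc sc
    by (rule vector_space_pair.intro[OF vector_space_axioms vector_space_axioms])
  obtain g where g: "Vector_Spaces.linear sc sc g" "\<forall>b\<in>B. g b = F b"
    using linear_independent_extend[OF B(2)] by blast
  interpret g: Vector_Spaces.linear sc sc g by fact
  have BS: "b \<in> B \<Longrightarrow> b \<in> S" for b using B(3) span_superset by blast
  have F_add: "F (x + y) = F x + F y" if "x \<in> S" "y \<in> S" for x y
    unfolding F_def using that BS by (simp add: add_right scale_left_distrib sum.distrib)
  have F_scale: "F (sc c x) = sc c (F x)" if "x \<in> S" for c x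
    unfolding F_def using that BS by (simp add: scale_right scale_sum_right)
  have F_0: "F 0 = 0"
    unfolding F_def using BS by (simp add: zero_right)
  let ?E = "{x \<in> S. g x = F x}"
  have "subspace ?E"
  proof (rule subspaceI)
    show "0 \<in> ?E" using subspace_0[OF subspace_S] F_0 g.zero by simp
    show "x + y \<in> ?E" if "x \<in> ?E" "y \<in> ?E" for x y
      using that F_add g.add subspace_add[OF subspace_S] by simp
    show "sc c x \<in> ?E" if "x \<in> ?E" for c x
      using that F_scale g.scale subspace_scale[OF subspace_S] by simp
  qed
  moreover have "B \<subseteq> ?E" using g(2) BS by blast
  ultimately have "x \<in> span B \<Longrightarrow> g x = F x" for x using span_minimal by blast
  with g(1) that show thesis unfolding F_def by blast
qed

lemma solvable_on_basis:
  assumes B: "finite B" "independent B" "span B \<subseteq> S"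
    and nondeg: "\<And>x. x \<in> span B \<Longrightarrow> \<forall>b\<in>B. s b x = 0 \<Longrightarrow> x = 0"
  shows "\<exists>x\<in>span B. \<forall>b\<in>B. s b x = \<phi> b"
proof -
  (* As s is conjugate-linear in its second argument, x \<mapsto> \<Sum>b\<in>B. sc (cnj (s b x)) b is linear;
     by nondegeneracy it is injective on span B, hence onto span B by counting dimensions. *)
  obtain g where g: "Vector_Spaces.linear sc sc g"
    and g_eq: "\<And>x. x \<in> span B \<Longrightarrow> g x = (\<Sum>b\<in>B. sc (cnj (s b x)) b)"
    using linear_extension_of_conj_coordinates[OF B] by blast
  interpret g: Vector_Spaces.linear sc sc g by fact
  have coeff_0: "\<forall>b\<in>B. c b = 0" if "(\<Sum>b\<in>B. sc (c b) b) = 0" for c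
    using independentD[OF B(2) B(1) subset_refl that] by blast
  have "inj_on g (span B)"
    unfolding g.inj_on_iff_eq_0[OF subspace_span]
  proof (intro ballI impI)
    fix x assume x: "x \<in> span B" "g x = 0"
    then have "\<forall>b\<in>B. cnj (s b x) = 0" using coeff_0[of "\<lambda>b. cnj (s b x)"] g_eq by simp
    then show "x = 0" using nondeg[OF x(1)] by simp
  qed
  moreover have "g ` span B \<subseteq> span B"
  proof (rule image_subsetI)
    fix x assume "x \<in> span B"
    then show "g x \<in> span B" unfolding g_eq[OF \<open>x \<in> span B\<close>]
      by (intro span_sum span_scale span_base)
  qed
  ultimately have "g ` span B = span B"
    by (rule linear_image_span_eq_if_inj_on[OF g B(1,2), rotated])
  moreover have "(\<Sum>b\<in>B. sc (cnj (\<phi> b)) b) \<in> span B"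
    by (intro span_sum span_scale span_base)
  ultimately have "(\<Sum>b\<in>B. sc (cnj (\<phi> b)) b) \<in> g ` span B" by simp
  then obtain x where x: "x \<in> span B" "g x = (\<Sum>b\<in>B. sc (cnj (\<phi> b)) b)"
    by (rule imageE) simp
  then have "(\<Sum>b\<in>B. sc (cnj (s b x) - cnj (\<phi> b)) b) = 0"
    using g_eq by (simp add: scale_left_diff_distrib sum_subtractf)
  then have "\<forall>b\<in>B. cnj (s b x) - cnj (\<phi> b) = 0" by (rule coeff_0)
  then have "\<forall>b\<in>B. s b x = \<phi> b" by simp
  with x(1) show ?thesis by blast
qed

lemma solvable_on_fin_dim_subsp:
  assumes V: "fin_dim_subsp sc V" "V \<subseteq> S"
    and nondeg: "\<And>x. x \<in> V \<Longrightarrow> \<forall>v\<in>V. s v x = 0 \<Longrightarrow> x = 0"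
    and t: "sesq_form sc S t" and y: "y \<in> S"
  shows "\<exists>x\<in>V. \<forall>v\<in>V. s v x = t v y"
proof -
  obtain B where B: "finite B" "independent B" "V = span B"
    using V(1) fin_dim_subsp_obtains_basis by blast
  have BS: "span B \<subseteq> S" using V(2) B(3) by simp
  then have BS': "B \<subseteq> S" using span_superset by blast
  have "x = 0" if x: "x \<in> span B" "\<forall>b\<in>B. s b x = 0" for x
  proof (rule nondeg)
    have xS: "x \<in> S" using x(1) BS by blast
    have "\<forall>b\<in>B. s b x = s b 0" using x(2) BS' zero_right by auto
    then have "\<forall>v\<in>span B. s v x = s v 0"
      using eq_on_span[OF sesq_form_axioms BS xS subspace_0[OF subspace_S]] by blast
    then show "\<forall>v\<in>V. s v x = 0" using B(3) BS zero_right by auto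
    show "x \<in> V" using x(1) B(3) by simp
  qed
  then obtain x where x: "x \<in> span B" "\<forall>b\<in>B. s b x = t b y"
    using solvable_on_basis[OF B(1,2) BS, of "\<lambda>b. t b y"] by blast
  then have "\<forall>v\<in>V. s v x = t v y"
    using eq_on_span[OF t BS subsetD[OF BS x(1)] y x(2)] B(3) by blast
  with x(1) B(3) show ?thesis by blast
qed

end

lemma (in csubspace) sesq_formI: "sesq_on sc S t \<Longrightarrow> sesq_form sc S t"
  by unfold_locales

section \<open>Inner products on a subspace\<close>

locale inner_subspace = csubspace sc S for sc :: "complex \<Rightarrow> 'a::ab_group_add \<Rightarrow> 'a" and S +
  fixes ip :: "'a \<Rightarrow> 'a \<Rightarrow> complex"
  assumes inner: "cinner_on sc ip S"
begin

lemma ip_conj_sym: "x \<in> S \<Longrightarrow> y \<in> S \<Longrightarrow> ip y x = cnj (ip x y)"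
  using inner[unfolded cinner_on_def, THEN conjunct2, THEN conjunct2, THEN conjunct1] by blast

lemma ip_self_Re_nonneg: "x \<in> S \<Longrightarrow> 0 \<le> Re (ip x x)"
  using inner[unfolded cinner_on_def, THEN conjunct2, THEN conjunct2, THEN conjunct2, THEN conjunct1]
  by blast

lemma ip_self_eq_0D: "x \<in> S \<Longrightarrow> ip x x = 0 \<Longrightarrow> x = 0"
  using inner[unfolded cinner_on_def, THEN conjunct2, THEN conjunct2, THEN conjunct2, THEN conjunct2]
  by blast

sublocale sesq_form sc S ip
proof
  have add: "ip (x + y) z = ip x z + ip y z" if "x \<in> S" "y \<in> S" "z \<in> S" for x y z
    using inner[unfolded cinner_on_def, THEN conjunct1] that by blast
  have scale: "ip (sc c x) y = c * ip x y" if "x \<in> S" "y \<in> S" for x y c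
    using inner[unfolded cinner_on_def, THEN conjunct2, THEN conjunct1] that by blast
  show "sesq_on sc S ip"
    unfolding sesq_on_def
  proof (intro conjI ballI allI)
    fix x y z assume xyz: "x \<in> S" "y \<in> S" "z \<in> S"
    then show "ip (x + y) z = ip x z + ip y z" by (rule add)
    have "ip x (y + z) = cnj (ip (y + z) x)"
      using ip_conj_sym[of "y + z" x] xyz subspace_add[OF subspace_S] by blast
    then show "ip x (y + z) = ip x y + ip x z"
      using add[of y z x] ip_conj_sym[of x y] ip_conj_sym[of x z] xyz by simp
  next
    fix c x y assume xy: "x \<in> S" "y \<in> S"
    then show "ip (sc c x) y = c * ip x y" by (rule scale)
    have "ip x (sc c y) = cnj (ip (sc c y) x)"
      using ip_conj_sym[of "sc c y" x] xy subspace_scale[OF subspace_S] by blast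
    then show "ip x (sc c y) = cnj c * ip x y"
      using scale[of y x c] ip_conj_sym[of x y] xy by simp
  qed
qed

lemma ip_self_eq_ip_norm_sq: "x \<in> S \<Longrightarrow> ip x x = complex_of_real ((ip_norm ip x)\<^sup>2)"
  using ip_conj_sym[of x x] ip_self_Re_nonneg[of x]
  by (simp add: ip_norm_def complex_eq_iff)

lemma ip_norm_sq_eq_Re: "x \<in> S \<Longrightarrow> (ip_norm ip x)\<^sup>2 = Re (ip x x)"
  unfolding ip_norm_def using ip_self_Re_nonneg by simp

lemma ip_norm_nonneg: "x \<in> S \<Longrightarrow> 0 \<le> ip_norm ip x"
  unfolding ip_norm_def using ip_self_Re_nonneg by simp

lemma ip_norm_zero: "ip_norm ip 0 = 0"
  unfolding ip_norm_def using zero_left[OF subspace_0[OF subspace_S]] by simp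

lemma ip_norm_pos: "x \<in> S \<Longrightarrow> x \<noteq> 0 \<Longrightarrow> 0 < ip_norm ip x"
  using ip_norm_nonneg[of x] ip_self_eq_ip_norm_sq[of x] ip_self_eq_0D[of x] by force

lemma ip_Cauchy_Schwarz:
  assumes x: "x \<in> S" and y: "y \<in> S"
  shows "cmod (ip x y) \<le> ip_norm ip x * ip_norm ip y"
proof (cases "y = 0")
  case True
  then show ?thesis using zero_right[OF x] ip_norm_zero by simp
next
  case False
  define r where "r = (ip_norm ip y)\<^sup>2"
  have r_pos: "0 < r" unfolding r_def using ip_norm_pos[OF y False] by simp
  define p where "p = ip x y"
  define t where "t = p / complex_of_real r"
  define z where "z = x - sc t y"
  have ty: "sc t y \<in> S" using y subspace_scale[OF subspace_S] by blast
  have z: "z \<in> S" unfolding z_def using x ty subspace_diff[OF subspace_S] by blast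
  have "ip z y = p - t * complex_of_real r"
    using diff_left[OF x ty y] scale_left[OF y y] ip_self_eq_ip_norm_sq[OF y]
    unfolding z_def p_def r_def by simp
  then have zy: "ip z y = 0" unfolding t_def using r_pos by simp
  have "ip z z = ip z x - cnj t * ip z y"
    using diff_right[OF z x ty, folded z_def] scale_right[OF z y] by simp
  also have "\<dots> = ip x x - t * cnj p"
    using zy diff_left[OF x ty x, folded z_def] scale_left[OF y x] ip_conj_sym[OF x y]
    unfolding p_def by simp
  also have "t * cnj p = complex_of_real ((cmod p)\<^sup>2 / r)"
    using complex_norm_square[of p] unfolding t_def by simp
  finally have "Re (ip z z) = Re (ip x x) - (cmod p)\<^sup>2 / r" by simp
  then have "(cmod p)\<^sup>2 \<le> Re (ip x x) * r"
    using ip_self_Re_nonneg[OF z] r_pos by (simp add: divide_le_eq)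
  also have "\<dots> = (ip_norm ip x * ip_norm ip y)\<^sup>2"
    unfolding r_def using ip_norm_sq_eq_Re[OF x] by (simp add: power_mult_distrib)
  finally show ?thesis unfolding p_def
    by (rule power2_le_imp_le) (simp add: ip_norm_nonneg x y)
qed

lemma ip_norm_triangle:
  assumes x: "x \<in> S" and y: "y \<in> S"
  shows "ip_norm ip (x + y) \<le> ip_norm ip x + ip_norm ip y"
proof -
  have xy: "x + y \<in> S" using x y subspace_add[OF subspace_S] by blast
  have "(ip_norm ip (x + y))\<^sup>2 = Re (ip x x) + 2 * Re (ip x y) + Re (ip y y)"
    using ip_norm_sq_eq_Re[OF xy] add_left[OF x y xy] add_right[OF x x y] add_right[OF y x y]
      ip_conj_sym[OF x y]
    by simp
  also have "\<dots> \<le> Re (ip x x) + 2 * (ip_norm ip x * ip_norm ip y) + Re (ip y y)"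
    using complex_Re_le_cmod[of "ip x y"] ip_Cauchy_Schwarz[OF x y] by simp
  also have "\<dots> = (ip_norm ip x + ip_norm ip y)\<^sup>2"
    using ip_norm_sq_eq_Re[OF x] ip_norm_sq_eq_Re[OF y] by (simp add: power2_sum)
  finally show ?thesis
    by (rule power2_le_imp_le) (simp add: ip_norm_nonneg x y)
qed

lemma ip_norm_scale: "x \<in> S \<Longrightarrow> ip_norm ip (sc c x) = cmod c * ip_norm ip x"
  unfolding ip_norm_def
  using scale_left[of x "sc c x" c] scale_right[of x x c] subspace_scale[OF subspace_S]
  by (simp add: mult.assoc[symmetric] complex_norm_square[symmetric] real_sqrt_mult)

lemma ip_norm_diff_le:
  assumes "x \<in> S" "y \<in> S"
  shows "ip_norm ip (x - y) \<le> ip_norm ip x + ip_norm ip y"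
  using ip_norm_triangle[of x "sc (-1) y"] ip_norm_scale[of y "-1"]
    subspace_scale[OF subspace_S] subspace_neg[OF subspace_S] assms
  by (simp add: scale_minus_left)

lemma ip_norm_add_Pythagorean:
  assumes x: "x \<in> S" and y: "y \<in> S" and orth: "ip x y = 0"
  shows "(ip_norm ip (x + y))\<^sup>2 = (ip_norm ip x)\<^sup>2 + (ip_norm ip y)\<^sup>2"
proof -
  have xy: "x + y \<in> S" using x y subspace_add[OF subspace_S] by blast
  have "ip (x + y) (x + y) = ip x x + ip y y"
    using add_left[OF x y xy] add_right[OF x x y] add_right[OF y x y] ip_conj_sym[OF x y] orth
    by simp
  then show ?thesis using ip_norm_sq_eq_Re x y xy by simp
qed

lemma oproj_fin_dim_subsp:
  assumes V: "fin_dim_subsp sc V" "V \<subseteq> S" and y: "y \<in> S"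
  shows "oproj ip V y \<in> V \<and> (\<forall>w\<in>V. ip (y - oproj ip V y) w = 0)"
proof -
  have "x = 0" if "x \<in> V" "\<forall>v\<in>V. ip v x = 0" for x
    using ip_self_eq_0D[OF subsetD[OF V(2) that(1)] that(2)[rule_format, OF that(1)]] .
  then obtain p where p: "p \<in> V" "\<forall>w\<in>V. ip w p = ip w y"
    using solvable_on_fin_dim_subsp[OF V _ sesq_form_axioms y] by blast
  have pS: "p \<in> S" and yp: "y - p \<in> S" using p(1) V(2) y subspace_diff[OF subspace_S] by blast+
  have orth: "ip (y - p) w = 0" if w: "w \<in> V" for w
  proof -
    have wS: "w \<in> S" using w V(2) by blast
    have "ip (y - p) w = cnj (ip w y - ip w p)"
      using ip_conj_sym[OF wS yp] diff_right[OF wS y pS] by simp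
    then show ?thesis using p(2) w by simp
  qed
  have unique: "q = p" if q: "q \<in> V" "\<forall>w\<in>V. ip (y - q) w = 0" for q
  proof -
    have pq: "p - q \<in> V" using p(1) q(1) subspace_diff subspace_if_fin_dim_subsp[OF V(1)] by blast
    have yq: "y - q \<in> S" and pqS: "p - q \<in> S"
      using q(1) pq V(2) y subspace_diff[OF subspace_S] by blast+
    have "ip (p - q) (p - q) = ip (y - q) (p - q) - ip (y - p) (p - q)"
      using diff_left[OF yq yp pqS] by simp
    also have "\<dots> = 0" using q(2) orth pq by simp
    finally have "p - q = 0" by (rule ip_self_eq_0D[OF pqS])
    then show "q = p" by simp
  qed
  have "oproj ip V y = p"
    unfolding oproj_def
  proof (rule the_equality)
    show "p \<in> V \<and> (\<forall>w\<in>V. ip (y - p) w = 0)" using p(1) orth by blast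
  qed (use unique in blast)
  then show ?thesis using p(1) orth by simp
qed

lemma ip_norm_diff_oproj_le:
  assumes V: "fin_dim_subsp sc V" "V \<subseteq> S" and y: "y \<in> S"
  shows "ip_norm ip (y - oproj ip V y) \<le> ip_norm ip y"
proof -
  define p where "p = oproj ip V y"
  have p: "p \<in> S" "ip (y - p) p = 0"
    using oproj_fin_dim_subsp[OF V y] V(2) unfolding p_def by auto
  have yp: "y - p \<in> S" using y p(1) subspace_diff[OF subspace_S] by blast
  have "(ip_norm ip y)\<^sup>2 = (ip_norm ip (y - p))\<^sup>2 + (ip_norm ip p)\<^sup>2"
    using ip_norm_add_Pythagorean[OF yp p] by simp
  then have "(ip_norm ip (y - p))\<^sup>2 \<le> (ip_norm ip y)\<^sup>2" by simp
  then show ?thesis unfolding p_def[symmetric]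
    by (rule power2_le_imp_le) (rule ip_norm_nonneg[OF y])
qed

lemma ip_norm_le_if_quasi_optimal:
  assumes V: "fin_dim_subsp sc V" "V \<subseteq> S" and C: "0 \<le> C"
    and u: "u \<in> S" "ip_norm ip u \<le> M" and uN: "uN \<in> S"
    and qo: "ip_norm ip (u - uN) \<le> C * ip_norm ip (u - oproj ip V u)"
  shows "ip_norm ip uN \<le> (1 + C) * M"
proof -
  have "ip_norm ip uN \<le> ip_norm ip u + ip_norm ip (u - uN)"
    using ip_norm_diff_le[of u "u - uN"] u(1) uN subspace_diff[OF subspace_S] by simp
  also have "\<dots> \<le> ip_norm ip u + C * ip_norm ip u"
    using qo ip_norm_diff_oproj_le[OF V u(1)] mult_left_mono[OF _ C]
    by (meson add_left_mono order_trans)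
  also have "\<dots> \<le> (1 + C) * M" using u(2) C by (simp add: algebra_simps mult_left_mono add_mono)
  finally show ?thesis .
qed

end

lemma inner_subspace_if_hilbert_on: "cvs sc \<Longrightarrow> hilbert_on sc ip S \<Longrightarrow> inner_subspace sc S ip"
  unfolding hilbert_on_def
  by (intro inner_subspace.intro csubspace.intro inner_subspace_axioms.intro
      csubspace_axioms.intro cvector_space_if_cvs) auto

section \<open>The discrete inf-sup condition\<close>

locale garding_galerkin =
  H0: inner_subspace sc UNIV ip0 + H: inner_subspace sc Hs ipH + A: sesq_form sc Hs a
  for sc :: "complex \<Rightarrow> 'a::ab_group_add \<Rightarrow> 'a" and ip0 Hs ipH a +
  fixes CG1 CG2 K :: real and V :: "'a set"
  assumes norm_le: "\<And>v. v \<in> Hs \<Longrightarrow> ip_norm ip0 v \<le> ip_norm ipH v"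
    and CG1_pos: "0 < CG1" and CG2_nonneg: "0 \<le> CG2"
    and garding: "\<And>v. v \<in> Hs \<Longrightarrow>
      CG1 * (ip_norm ipH v)\<^sup>2 \<le> cmod (a v v + complex_of_real (CG2 * (ip_norm ip0 v)\<^sup>2))"
    and V: "fin_dim_subsp sc V" "V \<subseteq> Hs"
    and galerkin_bound: "\<And>w. w \<in> V \<Longrightarrow> w \<noteq> 0 \<Longrightarrow>
      \<exists>uN\<in>V. (\<forall>v\<in>V. a uN v = ip0 w v) \<and> ip_norm ipH uN \<le> K * ip_norm ip0 w"
begin

lemma adjoint_norm_bound:
  assumes w: "w \<in> V" "w \<noteq> 0" and G: "0 \<le> G"
    and bound: "\<forall>v\<in>V. cmod (a v w) \<le> G * ip_norm ipH v"
  shows "CG1 * ip_norm ipH w \<le> G * (1 + CG2 * K)"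
proof -
  have wH: "w \<in> Hs" using w(1) V(2) by blast
  obtain uN where uN: "uN \<in> V" "\<forall>v\<in>V. a uN v = ip0 w v" "ip_norm ipH uN \<le> K * ip_norm ip0 w"
    using galerkin_bound[OF w] by blast
  define n0 nH where "n0 = ip_norm ip0 w" and "nH = ip_norm ipH w"
  have n0_pos: "0 < n0" unfolding n0_def using H0.ip_norm_pos[OF UNIV_I w(2)] .
  have nH_pos: "0 < nH" unfolding nH_def using H.ip_norm_pos[OF wH w(2)] .
  have n0_le: "n0 \<le> nH" unfolding n0_def nH_def using norm_le[OF wH] .
  have "0 \<le> ip_norm ipH uN" using H.ip_norm_nonneg uN(1) V(2) by blast
  then have "0 \<le> K * n0" using uN(3) unfolding n0_def by linarith
  then have K: "0 \<le> K" using n0_pos by (simp add: zero_le_mult_iff)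
  have "n0\<^sup>2 = cmod (a uN w)"
    using H0.ip_self_eq_ip_norm_sq[of w] uN(2) w(1) unfolding n0_def by (simp add: norm_power)
  also have "\<dots> \<le> G * ip_norm ipH uN" using bound uN(1) by blast
  also have "\<dots> \<le> G * (K * nH)"
    using uN(3) mult_left_mono[OF n0_le K] unfolding n0_def[symmetric]
    by (intro mult_left_mono[OF _ G]) simp
  finally have n0_sq: "n0\<^sup>2 \<le> G * (K * nH)" .
  have "CG1 * nH\<^sup>2 \<le> cmod (a w w + complex_of_real (CG2 * n0\<^sup>2))"
    using garding[OF wH] unfolding n0_def nH_def .
  also have "\<dots> \<le> cmod (a w w) + cmod (complex_of_real (CG2 * n0\<^sup>2))"
    by (rule norm_triangle_ineq)
  also have "\<dots> = cmod (a w w) + CG2 * n0\<^sup>2"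
    using CG2_nonneg by (simp add: norm_mult norm_power)
  also have "\<dots> \<le> G * nH + CG2 * (G * (K * nH))"
    using bound w(1) n0_sq CG2_nonneg unfolding nH_def by (intro add_mono mult_left_mono) auto
  also have "\<dots> = G * (1 + CG2 * K) * nH" by (simp add: algebra_simps)
  finally have "CG1 * nH * nH \<le> G * (1 + CG2 * K) * nH" by (simp add: power2_eq_square)
  then show ?thesis using nH_pos unfolding nH_def by simp
qed

lemma adjoint_nondegenerate:
  assumes x: "x \<in> V" and "\<forall>v\<in>V. a v x = 0"
  shows "x = 0"
proof (rule ccontr)
  assume x_ne: "x \<noteq> 0"
  then have "CG1 * ip_norm ipH x \<le> 0" using adjoint_norm_bound[OF x x_ne order_refl] assms(2) by simp
  moreover have "0 < ip_norm ipH x" using H.ip_norm_pos x x_ne V(2) by blast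
  ultimately show False using CG1_pos by (simp add: mult_le_0_iff)
qed

theorem infsup_ge: "ereal (CG1 / (1 + CG2 * K)) \<le> infsup a (ip_norm ipH) V"
  unfolding infsup_def
proof (rule INF_greatest)
  fix u assume "u \<in> V - {0}"
  then have u: "u \<in> V" "u \<noteq> 0" and uH: "u \<in> Hs" using V(2) by auto
  obtain x where x: "x \<in> V" "\<forall>v\<in>V. a v x = ipH v u"
    using A.solvable_on_fin_dim_subsp[OF V adjoint_nondegenerate H.sesq_form_axioms uH] by blast
  have xH: "x \<in> Hs" using x(1) V(2) by blast
  define nu nx where "nu = ip_norm ipH u" and "nx = ip_norm ipH x"
  have nu_pos: "0 < nu" unfolding nu_def using H.ip_norm_pos[OF uH u(2)] .
  have "a u x = ipH u u" using x(2) u(1) by blast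
  then have aux: "cmod (a u x) = nu\<^sup>2"
    unfolding nu_def using H.ip_self_eq_ip_norm_sq[OF uH] by (simp add: norm_power)
  then have x_ne: "x \<noteq> 0" using A.zero_right[OF uH] nu_pos by auto
  have nx_pos: "0 < nx" unfolding nx_def using H.ip_norm_pos[OF xH x_ne] .
  have "\<forall>v\<in>V. cmod (a v x) \<le> nu * ip_norm ipH v"
    using x(2) H.ip_Cauchy_Schwarz[OF _ uH] V(2) unfolding nu_def by (auto simp: mult.commute)
  then have bound: "CG1 * nx \<le> nu * (1 + CG2 * K)"
    using adjoint_norm_bound[OF x(1) x_ne] nu_pos unfolding nx_def by simp
  then have "0 < nu * (1 + CG2 * K)" using CG1_pos nx_pos by (meson mult_pos_pos order_less_le_trans)
  then have "0 < 1 + CG2 * K" using nu_pos by (simp add: zero_less_mult_iff)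
  with bound have "CG1 / (1 + CG2 * K) \<le> cmod (a u x) / (nu * nx)"
    using nu_pos nx_pos unfolding aux by (simp add: divide_le_eq le_divide_eq power2_eq_square)
  then show "ereal (CG1 / (1 + CG2 * K)) \<le>
      (SUP v\<in>V - {0}. ereal (cmod (a u v) / (ip_norm ipH u * ip_norm ipH v)))"
    using x(1) x_ne unfolding nu_def nx_def by (intro SUP_upper2[of x]) auto
qed

end

lemma solmap_norm_bound:
  assumes bounded: "\<exists>C. \<forall>f u. u \<in> Hs \<and> (\<forall>v\<in>Hs. a u v = ip0 f v) \<longrightarrow>
                     ip_norm ipH u \<le> C * ip_norm ip0 f"
    and pos: "\<And>f. f \<noteq> 0 \<Longrightarrow> 0 < ip_norm ip0 f"
    and f: "f \<noteq> 0" and u: "u \<in> Hs" "\<forall>v\<in>Hs. a u v = ip0 f v"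
  shows "ip_norm ipH u \<le> solmap_norm ip0 ipH Hs a * ip_norm ip0 f"
proof -
  let ?Q = "{ip_norm ipH u / ip_norm ip0 f | u f. f \<noteq> 0 \<and> u \<in> Hs \<and> (\<forall>v\<in>Hs. a u v = ip0 f v)}"
  obtain C where C: "\<forall>f u. u \<in> Hs \<and> (\<forall>v\<in>Hs. a u v = ip0 f v) \<longrightarrow> ip_norm ipH u \<le> C * ip_norm ip0 f"
    using bounded by blast
  have "bdd_above ?Q"
  proof (rule bdd_aboveI)
    fix r assume "r \<in> ?Q"
    then obtain u' f' where "r = ip_norm ipH u' / ip_norm ip0 f'" "f' \<noteq> 0"
      "u' \<in> Hs" "\<forall>v\<in>Hs. a u' v = ip0 f' v" by blast
    with C pos[of f'] show "r \<le> C" by (simp add: divide_le_eq)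
  qed
  moreover have "ip_norm ipH u / ip_norm ip0 f \<in> ?Q" using f u by blast
  ultimately have "ip_norm ipH u / ip_norm ip0 f \<le> solmap_norm ip0 ipH Hs a"
    unfolding solmap_norm_def by (rule cSup_upper[rotated])
  then show ?thesis using pos[OF f] by (simp add: divide_le_eq mult.commute)
qed

lemma galerkin_solution_norm_le:
  assumes H: "inner_subspace sc Hs ipH" and V: "fin_dim_subsp sc V" "V \<subseteq> Hs" and C: "0 \<le> C"
    and bounded: "\<exists>C. \<forall>f u. u \<in> Hs \<and> (\<forall>v\<in>Hs. a u v = ip0 f v) \<longrightarrow>
                     ip_norm ipH u \<le> C * ip_norm ip0 f"
    and pos: "\<And>f. f \<noteq> 0 \<Longrightarrow> 0 < ip_norm ip0 f"
    and f: "f \<noteq> 0" and u: "u \<in> Hs" "\<forall>v\<in>Hs. a u v = ip0 f v" and uN: "uN \<in> V"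
    and qo: "ip_norm ipH (u - uN) \<le> C * ip_norm ipH (u - oproj ipH V u)"
  shows "ip_norm ipH uN \<le> (1 + C) * solmap_norm ip0 ipH Hs a * ip_norm ip0 f"
  using inner_subspace.ip_norm_le_if_quasi_optimal[OF H V C u(1)
      solmap_norm_bound[OF bounded pos f u] _ qo] uN V(2)
  by (auto simp: mult.assoc)

theorem corollary4p9:
  fixes sc :: "complex \<Rightarrow> 'a::ab_group_add \<Rightarrow> 'a"
    and ip0 ipH :: "'a \<Rightarrow> 'a \<Rightarrow> complex"
    and Hs :: "'a set"
    and D :: "'a \<Rightarrow> 'a"
    and b :: "'a \<Rightarrow> 'a \<Rightarrow> complex"
    and mu_inv eps :: "nat \<Rightarrow> 'a \<Rightarrow> 'a"
    and a :: "nat \<Rightarrow> 'a \<Rightarrow> 'a \<Rightarrow> complex"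
    and CG1 CG2 :: "nat \<Rightarrow> real"
    and l :: nat and Cqo :: real
    and HN :: "nat \<Rightarrow> 'a set"
  assumes cvs: "cvs sc"
    and H0_hilbert: "hilbert_on sc ip0 UNIV"
    and H_hilbert: "hilbert_on sc ipH Hs"
    and norm_le: "\<forall>v\<in>Hs. ip_norm ip0 v \<le> ip_norm ipH v"
    and D_lin: "clinear_on sc Hs D"
    and D_bd: "\<forall>u\<in>Hs. ip_norm ip0 (D u) \<le> ip_norm ipH u"
    and b_sesq: "sesq_on sc Hs b"
    and b_cont: "\<exists>Cb. \<forall>u\<in>Hs. \<forall>v\<in>Hs. cmod (b u v) \<le> Cb * ip_norm ipH u * ip_norm ipH v"
    and mu_lin: "\<forall>k\<in>{1,2}. clinear_on sc UNIV (mu_inv k) \<and>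
                   (\<exists>C. \<forall>x. ip_norm ip0 (mu_inv k x) \<le> C * ip_norm ip0 x)"
    and eps_lin: "\<forall>k\<in>{1,2}. clinear_on sc UNIV (eps k) \<and>
                   (\<exists>C. \<forall>x. ip_norm ip0 (eps k x) \<le> C * ip_norm ip0 x)"
    and a_def: "\<forall>k u v. a k u v = ip0 (mu_inv k (D u)) (D v) + b u v - ip0 (eps k u) v"
    and garding: "\<forall>k\<in>{1,2}. CG1 k > 0 \<and> CG2 k > 0 \<and>
                   (\<forall>v\<in>Hs. cmod (a k v v + complex_of_real (CG2 k * (ip_norm ip0 v)\<^sup>2))
                            \<ge> CG1 k * (ip_norm ipH v)\<^sup>2)"
    and l: "l \<in> {1, 2}"
    and solvable: "\<forall>f. \<exists>!u. u \<in> Hs \<and> (\<forall>v\<in>Hs. a l u v = ip0 f v)"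
    and sol_bounded: "\<exists>C. \<forall>f u. u \<in> Hs \<and> (\<forall>v\<in>Hs. a l u v = ip0 f v) \<longrightarrow>
                        ip_norm ipH u \<le> C * ip_norm ip0 f"
    and Cqo: "0 < Cqo"
    and HN_sub: "\<forall>N. HN N \<subseteq> Hs \<and> fin_dim_subsp sc (HN N)"
    and galerkin: "\<forall>N f. (\<exists>!uN. uN \<in> HN N \<and> (\<forall>vN\<in>HN N. a l uN vN = ip0 f vN)) \<and>
                   (\<forall>uN u. uN \<in> HN N \<and> (\<forall>vN\<in>HN N. a l uN vN = ip0 f vN) \<and>
                          u \<in> Hs \<and> (\<forall>v\<in>Hs. a l u v = ip0 f v) \<longrightarrow>
                          ip_norm ipH (u - uN) \<le> Cqo * ip_norm ipH (u - oproj ipH (HN N) u))"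
  shows "\<forall>N. infsup (a l) (ip_norm ipH) (HN N) \<ge>
           ereal (1 / (inverse (CG1 l) *
             (1 + CG2 l * (1 + Cqo) * solmap_norm ip0 ipH Hs (a l))))"
proof
  fix N
  have H0: "inner_subspace sc UNIV ip0" and H: "inner_subspace sc Hs ipH"
    using inner_subspace_if_hilbert_on cvs H0_hilbert H_hilbert by blast+
  interpret H0: inner_subspace sc UNIV ip0 by (rule H0)
  interpret H: inner_subspace sc Hs ipH by (rule H)
  have fin: "fin_dim_subsp sc (HN N)" and sub: "HN N \<subseteq> Hs" using HN_sub by blast+
  have "a l = (\<lambda>u v. ip0 (mu_inv l (D u)) (D v) + b u v - ip0 (eps l u) v)"
    using a_def by (intro ext) simp
  moreover have "clinear_on sc UNIV (mu_inv l)" "clinear_on sc UNIV (eps l)"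
    using mu_lin eps_lin l by auto
  ultimately have A: "sesq_form sc Hs (a l)"
    using sesq_on_weak_form[OF H0.sesq _ _ D_lin b_sesq] by (simp add: H.sesq_formI)
  let ?S = "solmap_norm ip0 ipH Hs (a l)"
  have "\<exists>uN\<in>HN N. (\<forall>v\<in>HN N. a l uN v = ip0 w v) \<and> ip_norm ipH uN \<le> (1 + Cqo) * ?S * ip_norm ip0 w"
    if w: "w \<noteq> 0" for w
  proof -
    obtain u where u: "u \<in> Hs" "\<forall>v\<in>Hs. a l u v = ip0 w v" using solvable by blast
    obtain uN where uN: "uN \<in> HN N" "\<forall>v\<in>HN N. a l uN v = ip0 w v" using galerkin by blast
    have "ip_norm ipH (u - uN) \<le> Cqo * ip_norm ipH (u - oproj ipH (HN N) u)"
      using galerkin u uN by blast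
    with uN show ?thesis
      using galerkin_solution_norm_le[OF H fin sub _ sol_bounded H0.ip_norm_pos[OF UNIV_I] w u] Cqo
      by auto
  qed
  then interpret garding_galerkin sc ip0 Hs ipH "a l" "CG1 l" "CG2 l" "(1 + Cqo) * ?S" "HN N"
    using norm_le garding l fin sub
    by (intro garding_galerkin.intro garding_galerkin_axioms.intro H0 H A) auto
  show "infsup (a l) (ip_norm ipH) (HN N) \<ge>
           ereal (1 / (inverse (CG1 l) * (1 + CG2 l * (1 + Cqo) * ?S)))"
    using infsup_ge by (simp add: divide_inverse mult.assoc)
qed

end
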